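(* Let $T\in L_{aut}(\mathcal B)$ be generalized hyperbolic. Then either $\overline{B(T)}=\mathcal B$, or $T$ has a hyperbolic component. More precisely, if $\overline{B(T)}\neq\mathcal B$ then the map induced by $T$ on the quotient space $\mathcal B/\overline{B(T)}$ is hyperbolic.
   Context: $\mathcal B$ is a Banach space. $T$ is generalized hyperbolic if there is a decomposition $\mathcal B=E^-\oplus E^+$ into complementary closed subspaces with $T(E^+)\subset E^+$, $T^{-1}(E^-)\subset E^-$, and $T|_{E^+}$, $T^{-1}|_{E^-}$ uniform contractions. The bounded set $B(T)$ is the set of $x$ for which there exist $K>0$ and strictly increasing sequences of positive integers $(k_n),(m_n)$ with $|T^{k_n}x|<K$ and $|T^{-m_n}x|<K$; for generalized hyperbolic $T$, $\overline{B(T)}$ is a closed subspace with $T(\overline{B(T)})=\overline{B(T)}$. An operator is hyperbolic if its spectrum does not meet the unit circle. $T$ has a hyperbolic component if there is a closed subspace $F\ne\mathcal B$ with $T(F)=F$ such that the induced map on $\mathcal B/F$ is hyperbolic. *)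

theory Defs
  imports "HOL-Analysis.Analysis"
begin

text \<open>Real Banach space 'a (a complex Banach space is in particular a real one).
  L_aut: bounded linear bijections (bounded inverse then automatic, but stated too).\<close>
definition laut :: "('a::banach \<Rightarrow> 'a) \<Rightarrow> bool" where
  "laut T \<longleftrightarrow> bounded_linear T \<and> bij T \<and> bounded_linear (inv T)"

definition uniform_contraction_on :: "'a set \<Rightarrow> ('a::real_normed_vector \<Rightarrow> 'a) \<Rightarrow> bool" where
  "uniform_contraction_on E S \<longleftrightarrow>
     (\<exists>C t. C > 0 \<and> 0 < t \<and> t < 1 \<and>
        (\<forall>n. \<forall>x\<in>E. norm ((S ^^ n) x) \<le> C * t ^ n * norm x))"

definition generalized_hyperbolic :: "('a::banach \<Rightarrow> 'a) \<Rightarrow> bool" where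
  "generalized_hyperbolic T \<longleftrightarrow>
     (\<exists>Em Ep. closed Em \<and> closed Ep \<and> subspace Em \<and> subspace Ep \<and>
        Em \<inter> Ep = {0} \<and> (\<forall>z. \<exists>u\<in>Em. \<exists>v\<in>Ep. z = u + v) \<and>
        T ` Ep \<subseteq> Ep \<and> inv T ` Em \<subseteq> Em \<and>
        uniform_contraction_on Ep T \<and> uniform_contraction_on Em (inv T))"

definition bounded_set :: "('a::banach \<Rightarrow> 'a) \<Rightarrow> 'a set" where
  "bounded_set T = {x. \<exists>K>0. \<exists>k m :: nat \<Rightarrow> nat.
      strict_mono k \<and> strict_mono m \<and> (\<forall>n. k n > 0 \<and> m n > 0) \<and>
      (\<forall>n. norm ((T ^^ k n) x) < K \<and> norm ((inv T ^^ m n) x) < K)}"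

text \<open>The operator induced by T on the quotient B/F (F a closed T-invariant subspace) is
  hyperbolic: no lambda = a + i b with |lambda| = 1 lies in its spectrum. The spectrum is
  taken for the complexification (B/F) x (B/F), on which T - lambda acts as
  (x,y) |-> (T x - a x + b y, T y - b x - a y); lambda is not in the spectrum iff this
  induced map is bijective on the quotient (bounded inverse is then automatic by the
  open mapping theorem, B/F being Banach).\<close>
definition quotient_hyperbolic :: "('a::banach \<Rightarrow> 'a) \<Rightarrow> 'a set \<Rightarrow> bool" where
  "quotient_hyperbolic T F \<longleftrightarrow>
     (\<forall>a b::real. a\<^sup>2 + b\<^sup>2 = 1 \<longrightarrow>
        (\<forall>x y. T x - a *\<^sub>R x + b *\<^sub>R y \<in> F \<and> T y - b *\<^sub>R x - a *\<^sub>R y \<in> F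
               \<longrightarrow> x \<in> F \<and> y \<in> F) \<and>
        (\<forall>u v. \<exists>x y. T x - a *\<^sub>R x + b *\<^sub>R y - u \<in> F \<and> T y - b *\<^sub>R x - a *\<^sub>R y - v \<in> F))"

definition has_hyperbolic_component :: "('a::banach \<Rightarrow> 'a) \<Rightarrow> bool" where
  "has_hyperbolic_component T \<longleftrightarrow>
     (\<exists>F. closed F \<and> subspace F \<and> F \<noteq> UNIV \<and> T ` F = F \<and> quotient_hyperbolic T F)"

end

(* Let F be the closure of the set of points whose forward and backward orbits are both
   bounded.  A point v of E+ whose backward iterates T^-m v are bounded along a subsequence is
   the limit of T^m applied to the E- parts of T^-m v: these points have bounded orbits, and the
   error is T^m applied to the bounded E+ parts, which decays geometrically.  Hence F is the
   closure of B(T), and F is invariant under T, T^-1 and the projections of the splitting.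
   For |lambda| = 1, the complexified T - lambda is inverted on pairs of E+ vectors by a Neumann
   series in T and on pairs of E- vectors by one in T^-1, within any closed subspace invariant
   under these maps.  Applied to the whole space this makes T - lambda onto modulo F; applied to
   F, together with the fact that its kernel consists of points with bounded orbits, it makes
   T - lambda injective modulo F.  The boundedness of the projections needed on the way is the
   open mapping theorem. *)

theory Submission
  imports Defs
begin

lemma closed_cover_interior_nonempty:
  fixes A :: "nat \<Rightarrow> 'a::banach set"
  assumes "\<And>k. closed (A k)" and "(\<Union>k. A k) = UNIV"
  shows "\<exists>k. interior (A k) \<noteq> {}"
proof (rule ccontr)
  assume "\<not> ?thesis"
  then have "euclidean interior_of \<Union>(range A) = {}"
    by (intro Baire_category_alt) (auto simp: completely_metrizable_space_euclidean assms)
  then show False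
    using assms(2) by simp
qed

lemma subspace_closure:
  fixes S :: "'a::real_normed_vector set"
  assumes "subspace S"
  shows "subspace (closure S)"
  unfolding subspace_def
proof (intro conjI ballI allI)
  show "0 \<in> closure S"
    using assms closure_subset subspace_0 by blast
next
  fix x y
  assume "x \<in> closure S" "y \<in> closure S"
  then obtain f g where "\<forall>n. f n \<in> S" "f \<longlonglongrightarrow> x" "\<forall>n. g n \<in> S" "g \<longlonglongrightarrow> y"
    unfolding closure_sequential by blast
  then have "\<forall>n. f n + g n \<in> S" "(\<lambda>n. f n + g n) \<longlonglongrightarrow> x + y"
    using assms by (auto intro: subspace_add tendsto_add)
  then show "x + y \<in> closure S"
    unfolding closure_sequential by (intro exI[of _ "\<lambda>n. f n + g n"]) simp
next
  fix c :: real and x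
  assume "x \<in> closure S"
  then obtain f where "\<forall>n. f n \<in> S" "f \<longlonglongrightarrow> x"
    unfolding closure_sequential by blast
  then have "\<forall>n. c *\<^sub>R f n \<in> S" "(\<lambda>n. c *\<^sub>R f n) \<longlonglongrightarrow> c *\<^sub>R x"
    using assms by (auto intro: subspace_scale tendsto_scaleR)
  then show "c *\<^sub>R x \<in> closure S"
    unfolding closure_sequential by (intro exI[of _ "\<lambda>n. c *\<^sub>R f n"]) simp
qed

lemma suminf_in_closed_subspace:
  fixes f :: "nat \<Rightarrow> 'a::real_normed_vector"
  assumes "closed S" "subspace S" "summable f" "\<And>n. f n \<in> S"
  shows "suminf f \<in> S"
  by (rule closed_sequentially[OF assms(1) _ summable_LIMSEQ[OF assms(3)]])
    (use assms in \<open>auto intro: subspace_sum\<close>)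

lemma open_mapping_ball:
  fixes f :: "'a::real_normed_vector \<Rightarrow> 'b::banach"
  assumes f: "bounded_linear f" and S: "subspace S" and surj: "f ` S = UNIV"
  shows "\<exists>r>0. \<exists>k. \<forall>y \<epsilon>. norm y < r \<longrightarrow> \<epsilon> > 0 \<longrightarrow> (\<exists>x\<in>S. norm x \<le> k \<and> norm (y - f x) < \<epsilon>)"
proof -
  define W where "W k = f ` (S \<inter> cball 0 (real k))" for k
  have "y \<in> (\<Union>k. closure (W k))" for y
  proof -
    obtain x where x: "x \<in> S" "y = f x"
      using surj by (metis UNIV_I imageE)
    have "norm x \<le> real (nat \<lceil>norm x\<rceil>)"
      by linarith
    then have "y \<in> W (nat \<lceil>norm x\<rceil>)"
      unfolding W_def using x by (intro image_eqI[of _ _ x]) auto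
    then show ?thesis
      using closure_subset by blast
  qed
  then have "(\<Union>k. closure (W k)) = UNIV"
    by blast
  then obtain k where "interior (closure (W k)) \<noteq> {}"
    using closed_cover_interior_nonempty[of "\<lambda>k. closure (W k)"] by auto
  then obtain x0 where "x0 \<in> interior (closure (W k))"
    by blast
  then obtain r where "r > 0" "ball x0 r \<subseteq> interior (closure (W k))"
    using open_interior openE by metis
  then have r: "r > 0" "ball x0 r \<subseteq> closure (W k)"
    using interior_subset by blast+
  have small: "\<exists>x\<in>S. norm x \<le> k \<and> norm (y - f x) < \<epsilon>" if "norm y < r" "\<epsilon> > 0" for y \<epsilon>
  proof -
    have "x0 + y \<in> closure (W k)" "x0 - y \<in> closure (W k)"
      using r that(1) by (auto simp: dist_norm)
    then obtain w1 w2 where "w1 \<in> W k" "dist w1 (x0 + y) < \<epsilon>" "w2 \<in> W k" "dist w2 (x0 - y) < \<epsilon>"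
      using \<open>\<epsilon> > 0\<close> unfolding closure_approachable by blast
    then obtain s1 s2 where s: "s1 \<in> S" "norm s1 \<le> k" "norm (x0 + y - f s1) < \<epsilon>"
      "s2 \<in> S" "norm s2 \<le> k" "norm (x0 - y - f s2) < \<epsilon>"
      unfolding W_def by (auto simp: dist_norm norm_minus_commute)
    define x where "x = (1/2) *\<^sub>R (s1 - s2)"
    have "x \<in> S"
      using s S by (auto simp: x_def intro: subspace_scale subspace_diff)
    moreover have "norm x \<le> k"
      using norm_triangle_ineq4[of s1 s2] s by (simp add: x_def)
    moreover have "y - f x = (1/2) *\<^sub>R ((x0 + y - f s1) - (x0 - y - f s2))"
      by (simp add: x_def linear_diff linear_scale bounded_linear.linear[OF f] algebra_simps
          flip: scaleR_add_left)
    then have "norm (y - f x) < \<epsilon>"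
      using norm_triangle_ineq4[of "x0 + y - f s1" "x0 - y - f s2"] s by simp
    ultimately show ?thesis
      by blast
  qed
  then show ?thesis
    using r(1) by blast
qed

lemma open_mapping_approximate:
  fixes f :: "'a::real_normed_vector \<Rightarrow> 'b::banach"
  assumes f: "bounded_linear f" and S: "subspace S" and surj: "f ` S = UNIV"
  shows "\<exists>M>0. \<forall>y \<epsilon>. \<epsilon> > 0 \<longrightarrow> (\<exists>x\<in>S. norm x \<le> M * norm y \<and> norm (y - f x) < \<epsilon>)"
proof -
  obtain r k where r: "r > 0"
    and small: "\<And>y \<epsilon>. norm y < r \<Longrightarrow> \<epsilon> > 0 \<Longrightarrow> \<exists>x\<in>S. norm x \<le> k \<and> norm (y - f x) < \<epsilon>"
    using open_mapping_ball[OF f S surj] by blast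
  define M where "M = 2 * \<bar>k\<bar> / r + 1"
  have approx: "\<exists>x\<in>S. norm x \<le> M * norm y \<and> norm (y - f x) < \<epsilon>" if \<epsilon>: "\<epsilon> > 0" for y \<epsilon>
  proof (cases "y = 0")
    case True
    then show ?thesis
      using \<epsilon> S bounded_linear.linear[OF f] by (auto intro!: bexI[of _ 0] subspace_0 simp: linear_0)
  next
    case False
    define s where "s = r / (2 * norm y)"
    have "s > 0" "norm (s *\<^sub>R y) < r"
      using False r by (simp_all add: s_def)
    then obtain x where x: "x \<in> S" "norm x \<le> k" "norm (s *\<^sub>R y - f x) < s * \<epsilon>"
      using small \<epsilon> by (meson mult_pos_pos)
    have "norm ((1/s) *\<^sub>R x) \<le> \<bar>k\<bar> / s"
      using x(2) \<open>s > 0\<close> by (simp add: divide_right_mono)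
    also have "\<dots> = (2 * \<bar>k\<bar> / r) * norm y"
      using False r by (simp add: s_def)
    also have "\<dots> \<le> M * norm y"
      by (simp add: M_def distrib_right)
    finally have "norm ((1/s) *\<^sub>R x) \<le> M * norm y" .
    moreover have "y - f ((1/s) *\<^sub>R x) = (1/s) *\<^sub>R (s *\<^sub>R y - f x)"
      using \<open>s > 0\<close> by (simp add: linear_scale bounded_linear.linear[OF f] algebra_simps)
    then have "norm (y - f ((1/s) *\<^sub>R x)) = norm (s *\<^sub>R y - f x) / s"
      using \<open>s > 0\<close> by simp
    then have "norm (y - f ((1/s) *\<^sub>R x)) < \<epsilon>"
      using x(3) \<open>s > 0\<close> by (simp add: pos_divide_less_eq mult.commute)
    moreover have "(1/s) *\<^sub>R x \<in> S"
      using x(1) S by (simp add: subspace_scale)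
    ultimately show ?thesis
      by blast
  qed
  moreover have "M > 0"
    using r by (simp add: M_def add_nonneg_pos)
  ultimately show ?thesis
    by blast
qed

lemma preimage_by_successive_approximation:
  fixes f :: "'a::banach \<Rightarrow> 'b::real_normed_vector"
  assumes f: "bounded_linear f" and S: "closed S" "subspace S" and "M > 0"
    and approx: "\<And>y \<epsilon>. \<epsilon> > 0 \<Longrightarrow> \<exists>x\<in>S. norm x \<le> M * norm y \<and> norm (y - f x) < \<epsilon>"
  shows "\<exists>x\<in>S. f x = y \<and> norm x \<le> 2 * M * norm y"
proof (cases "y = 0")
  case True
  then show ?thesis
    using S(2) bounded_linear.linear[OF f] by (auto intro!: bexI[of _ 0] subspace_0 simp: linear_0)
next
  case False
  define e where "e n = norm y / 2 ^ Suc n" for n :: nat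
  have "e n > 0" for n
    using False by (simp add: e_def)
  then have "\<forall>z n. \<exists>x. x \<in> S \<and> norm x \<le> M * norm z \<and> norm (z - f x) < e n"
    using approx by meson
  then obtain g where g: "\<And>z n. g z n \<in> S" "\<And>z n. norm (g z n) \<le> M * norm z"
    "\<And>z n. norm (z - f (g z n)) < e n"
    by metis
  \<comment> \<open>\<open>Y n\<close> is the error left after the corrections \<open>X 0, \<dots>, X (n - 1)\<close>.\<close>
  define Y where "Y = rec_nat y (\<lambda>n z. z - f (g z n))"
  define X where "X n = g (Y n) n" for n
  have Y_0: "Y 0 = y" and Y_Suc: "Y (Suc n) = Y n - f (X n)" for n
    by (simp_all add: Y_def X_def)
  have norm_Y: "norm (Y n) \<le> norm y * (1/2) ^ n" for n
  proof (cases n)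
    case (Suc m)
    then show ?thesis
      using g(3)[of "Y m" m] by (simp add: Y_Suc X_def e_def power_divide)
  qed (simp add: Y_0)
  have norm_X: "norm (X n) \<le> M * norm y * (1/2) ^ n" for n
    using order_trans[OF g(2) mult_left_mono[OF norm_Y less_imp_le[OF \<open>M > 0\<close>]]]
    by (simp add: X_def mult.assoc)
  have geom: "summable (\<lambda>n. M * norm y * (1/2) ^ n :: real)"
    by (intro summable_mult summable_geometric) simp
  have X: "summable X"
    using summable_comparison_test'[OF geom] norm_X by blast
  have "(\<Sum>i<n. f (X i)) = y - Y n" for n
    by (induction n) (simp_all add: Y_0 Y_Suc)
  moreover have "Y \<longlonglongrightarrow> 0"
    by (rule Lim_null_comparison[OF always_eventually[OF allI[OF norm_Y]]])
      (intro tendsto_mult_right_zero LIMSEQ_power_zero, simp)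
  ultimately have "(\<lambda>n. f (X n)) sums y"
    unfolding sums_def using tendsto_diff[OF tendsto_const[of y] \<open>Y \<longlonglongrightarrow> 0\<close>] by simp
  then have "f (suminf X) = y"
    using bounded_linear.suminf[OF f X] by (simp add: sums_iff)
  moreover have "suminf X \<in> S"
    using suminf_in_closed_subspace[OF S X] g(1) by (simp add: X_def)
  moreover have "norm (suminf X) \<le> 2 * M * norm y"
    using norm_suminf_le[OF norm_X geom] by (simp add: suminf_mult suminf_geometric)
  ultimately show ?thesis
    by blast
qed

theorem open_mapping_closed_subspace:
  fixes f :: "'a::banach \<Rightarrow> 'b::banach"
  assumes f: "bounded_linear f" and S: "closed S" "subspace S" and surj: "f ` S = UNIV"
  shows "\<exists>M>0. \<forall>y. \<exists>x\<in>S. f x = y \<and> norm x \<le> M * norm y"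
proof -
  obtain M where "M > 0"
    and "\<And>y \<epsilon>. \<epsilon> > 0 \<Longrightarrow> \<exists>x\<in>S. norm x \<le> M * norm y \<and> norm (y - f x) < \<epsilon>"
    using open_mapping_approximate[OF f S(2) surj] by blast
  then have "\<exists>x\<in>S. f x = y \<and> norm x \<le> 2 * M * norm y" for y
    by (rule preimage_by_successive_approximation[OF f S])
  then show ?thesis
    using \<open>M > 0\<close> by (intro exI[of _ "2 * M"]) auto
qed

definition complementary :: "'a::real_vector set \<Rightarrow> 'a set \<Rightarrow> bool" where
  "complementary A B \<longleftrightarrow>
     subspace A \<and> subspace B \<and> A \<inter> B = {0} \<and> (\<forall>x. \<exists>u\<in>A. \<exists>v\<in>B. x = u + v)"

definition proj_along :: "'a::real_vector set \<Rightarrow> 'a set \<Rightarrow> 'a \<Rightarrow> 'a" where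
  "proj_along A B x = (THE u. u \<in> A \<and> x - u \<in> B)"

lemma complementary_commute: "complementary A B \<longleftrightarrow> complementary B A"
  unfolding complementary_def by (metis add.commute inf_commute)

lemma proj_along_eq:
  assumes "complementary A B" "u \<in> A" "x - u \<in> B"
  shows "proj_along A B x = u"
  unfolding proj_along_def
proof (rule the_equality)
  fix u'
  assume u': "u' \<in> A \<and> x - u' \<in> B"
  have "u' - u \<in> A"
    using assms u' by (auto simp: complementary_def subspace_diff)
  moreover have "u' - u \<in> B"
    using assms u' subspace_diff[of B "x - u" "x - u'"] by (simp add: complementary_def)
  ultimately have "u' - u \<in> A \<inter> B"
    by blast
  then show "u' = u"
    using assms(1) unfolding complementary_def by simp
qed (use assms in simp)

lemma proj_along:
  assumes "complementary A B"
  shows "proj_along A B x \<in> A" "x - proj_along A B x \<in> B"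
proof -
  obtain u v where "u \<in> A" "v \<in> B" "x = u + v"
    using assms unfolding complementary_def by blast
  then have "proj_along A B x = u"
    using assms by (intro proj_along_eq) auto
  then show "proj_along A B x \<in> A" "x - proj_along A B x \<in> B"
    using \<open>u \<in> A\<close> \<open>v \<in> B\<close> \<open>x = u + v\<close> by auto
qed

lemma proj_along_commute:
  assumes "complementary A B"
  shows "proj_along B A x = x - proj_along A B x"
  using assms proj_along[OF assms] by (intro proj_along_eq) (auto simp: complementary_commute)

lemma linear_proj_along:
  assumes "complementary A B"
  shows "linear (proj_along A B)"
proof -
  have A: "subspace A" and B: "subspace B"
    using assms by (auto simp: complementary_def)
  note P = proj_along[OF assms]
  show ?thesis
  proof (rule linearI)
    fix x y
    have "x + y - (proj_along A B x + proj_along A B y) = (x - proj_along A B x) + (y - proj_along A B y)"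
      by simp
    then show "proj_along A B (x + y) = proj_along A B x + proj_along A B y"
      using P A B by (metis assms proj_along_eq subspace_add)
  next
    fix c :: real and x
    have "c *\<^sub>R x - c *\<^sub>R proj_along A B x = c *\<^sub>R (x - proj_along A B x)"
      by (simp add: scaleR_diff_right)
    then show "proj_along A B (c *\<^sub>R x) = c *\<^sub>R proj_along A B x"
      using P A B by (metis assms proj_along_eq subspace_scale)
  qed
qed

lemma bounded_linear_proj_along:
  fixes A B :: "'a::banach set"
  assumes "closed A" "closed B" "complementary A B"
  shows "bounded_linear (proj_along A B)"
proof -
  have sum: "bounded_linear (\<lambda>z::'a \<times> 'a. fst z + snd z)"
    by (intro bounded_linear_add bounded_linear_fst bounded_linear_snd)
  have "x \<in> (\<lambda>z. fst z + snd z) ` (A \<times> B)" for x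
  proof -
    obtain u v where "u \<in> A" "v \<in> B" "x = u + v"
      using assms(3) unfolding complementary_def by blast
    then show ?thesis
      by (intro image_eqI[of _ _ "(u, v)"]) auto
  qed
  then have surj: "(\<lambda>z. fst z + snd z) ` (A \<times> B) = UNIV"
    by blast
  have "closed (A \<times> B)" "subspace (A \<times> B)"
    using assms by (auto simp: closed_Times subspace_Times complementary_def)
  then obtain M where M: "M > 0" "\<forall>x. \<exists>z\<in>A \<times> B. fst z + snd z = x \<and> norm z \<le> M * norm x"
    using open_mapping_closed_subspace[OF sum _ _ surj] by blast
  have bound: "norm (proj_along A B x) \<le> norm x * M" for x
  proof -
    obtain z where z: "z \<in> A \<times> B" "fst z + snd z = x" "norm z \<le> M * norm x"
      using M(2) by blast
    then have "proj_along A B x = fst z"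
      using assms(3) by (intro proj_along_eq) auto
    then show ?thesis
      using norm_fst_le[of "fst z" "snd z"] z(3) by (simp add: mult.commute)
  qed
  show ?thesis
    by (rule bounded_linear_intro[where K = M])
      (use linear_proj_along[OF assms(3)] bound in \<open>auto simp: linear_add linear_scale\<close>)
qed

lemma neumann_series_solve:
  fixes L :: "'a::banach \<Rightarrow> 'a"
  assumes L: "bounded_linear L" and K: "closed K" "subspace K" "L ` K \<subseteq> K"
    and w: "w \<in> K" and summable: "summable (\<lambda>n. (L ^^ n) w)"
  shows "\<exists>z\<in>K. z - L z = w"
proof
  define z where "z = (\<Sum>n. (L ^^ n) w)"
  have "(L ^^ n) w \<in> K" for n
    using K(3) w by (induction n) auto
  then show "z \<in> K"
    unfolding z_def by (rule suminf_in_closed_subspace[OF K(1,2) summable])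
  have "L z = (\<Sum>n. (L ^^ Suc n) w)"
    unfolding z_def using bounded_linear.suminf[OF L summable] by simp
  also have "\<dots> = z - w"
    unfolding z_def using suminf_split_head[OF summable] by simp
  finally show "z - L z = w"
    by simp
qed

text \<open>A pair \<open>(x, y)\<close> stands for the vector \<open>x + i y\<close> of the complexification; \<open>cscale \<mu>\<close> is
  multiplication by the complex scalar \<open>\<mu>\<close> there, and \<open>cshift T \<mu>\<close> is the complexification of
  \<open>T - \<mu>\<close>.\<close>
definition cscale :: "complex \<Rightarrow> 'a::real_vector \<times> 'a \<Rightarrow> 'a \<times> 'a" where
  "cscale \<mu> z = (Re \<mu> *\<^sub>R fst z - Im \<mu> *\<^sub>R snd z, Im \<mu> *\<^sub>R fst z + Re \<mu> *\<^sub>R snd z)"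

definition cshift :: "('a::real_vector \<Rightarrow> 'a) \<Rightarrow> complex \<Rightarrow> 'a \<times> 'a \<Rightarrow> 'a \<times> 'a" where
  "cshift T \<mu> z = map_prod T T z - cscale \<mu> z"

lemma cscale_cscale: "cscale \<mu> (cscale \<nu> z) = cscale (\<mu> * \<nu>) z"
  by (simp add: cscale_def algebra_simps)

lemma cscale_1 [simp]: "cscale 1 z = z"
  by (simp add: cscale_def)

lemma bounded_linear_cscale: "bounded_linear (cscale \<mu> :: 'a::real_normed_vector \<times> 'a \<Rightarrow> _)"
  unfolding cscale_def
  by (intro bounded_linear_Pair bounded_linear_add bounded_linear_sub
      bounded_linear_compose[OF bounded_linear_scaleR_right bounded_linear_fst]
      bounded_linear_compose[OF bounded_linear_scaleR_right bounded_linear_snd])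

lemma bounded_linear_map_prod:
  assumes "bounded_linear f"
  shows "bounded_linear (map_prod f f)"
proof -
  have "map_prod f f = (\<lambda>z. (f (fst z), f (snd z)))"
    by (auto simp: fun_eq_iff prod_eq_iff)
  then show ?thesis
    using bounded_linear_Pair[OF bounded_linear_compose[OF assms bounded_linear_fst]
        bounded_linear_compose[OF assms bounded_linear_snd]]
    by simp
qed

lemma norm_map_prod_le: "norm (map_prod f g z) \<le> norm (f (fst z)) + norm (g (snd z))"
  by (metis map_prod_simp norm_Pair_le prod.collapse)

lemma norm_cscale_le: "norm (cscale \<mu> z) \<le> 4 * cmod \<mu> * norm (z :: 'a::real_normed_vector \<times> 'a)"
proof -
  have component: "norm (c *\<^sub>R fst z + d *\<^sub>R snd z) \<le> 2 * cmod \<mu> * norm z"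
    if "\<bar>c\<bar> \<le> cmod \<mu>" "\<bar>d\<bar> \<le> cmod \<mu>" for c d
  proof -
    have "norm (c *\<^sub>R fst z + d *\<^sub>R snd z) \<le> \<bar>c\<bar> * norm (fst z) + \<bar>d\<bar> * norm (snd z)"
      using norm_triangle_ineq[of "c *\<^sub>R fst z" "d *\<^sub>R snd z"] by simp
    also have "\<dots> \<le> cmod \<mu> * norm z + cmod \<mu> * norm z"
      using that norm_fst_le[of "fst z" "snd z"] norm_snd_le[of "snd z" "fst z"]
      by (intro add_mono mult_mono) auto
    finally show ?thesis
      by simp
  qed
  have "norm (cscale \<mu> z) \<le> norm (Re \<mu> *\<^sub>R fst z + (- Im \<mu>) *\<^sub>R snd z)
      + norm (Im \<mu> *\<^sub>R fst z + Re \<mu> *\<^sub>R snd z)"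
    unfolding cscale_def using norm_Pair_le by simp
  also have "\<dots> \<le> 2 * cmod \<mu> * norm z + 2 * cmod \<mu> * norm z"
    by (intro add_mono component) (auto simp: abs_Re_le_cmod abs_Im_le_cmod)
  finally show ?thesis
    by simp
qed

lemma cscale_mem_Times:
  assumes "subspace A" "z \<in> A \<times> A"
  shows "cscale \<mu> z \<in> A \<times> A"
  using assms by (auto simp: cscale_def intro!: subspace_add subspace_diff subspace_scale)

lemma map_prod_cscale:
  assumes "linear f"
  shows "map_prod f f (cscale \<mu> z) = cscale \<mu> (map_prod f f z)"
  using assms by (simp add: cscale_def linear_diff linear_add linear_scale)

lemma funpow_map_prod_eigenvector:
  assumes "linear f" and "map_prod f f z = cscale \<mu> z"
  shows "map_prod (f ^^ n) (f ^^ n) z = cscale (\<mu> ^ n) z"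
proof (induction n)
  case (Suc n)
  have "map_prod (f ^^ Suc n) (f ^^ Suc n) z = map_prod f f (map_prod (f ^^ n) (f ^^ n) z)"
    by (simp add: prod_eq_iff)
  also have "\<dots> = cscale (\<mu> ^ Suc n) z"
    using Suc assms by (simp add: map_prod_cscale cscale_cscale mult.commute)
  finally show ?case .
qed (simp add: map_prod_def)

lemma Bseq_funpow_eigenvector:
  fixes f :: "'a::real_normed_vector \<Rightarrow> 'a"
  assumes "linear f" and "map_prod f f z = cscale \<mu> z" and "cmod \<mu> = 1"
  shows "Bseq (\<lambda>n. (f ^^ n) (fst z))" "Bseq (\<lambda>n. (f ^^ n) (snd z))"
proof -
  have "norm (map_prod (f ^^ n) (f ^^ n) z) \<le> 4 * norm z" for n
    using norm_cscale_le[of "\<mu> ^ n" z] assms by (simp add: funpow_map_prod_eigenvector norm_power)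
  moreover have "norm ((f ^^ n) (fst z)) \<le> norm (map_prod (f ^^ n) (f ^^ n) z)"
    "norm ((f ^^ n) (snd z)) \<le> norm (map_prod (f ^^ n) (f ^^ n) z)" for n
    by (cases z; simp add: norm_fst_le norm_snd_le)+
  ultimately have "norm ((f ^^ n) (fst z)) \<le> 4 * norm z" "norm ((f ^^ n) (snd z)) \<le> 4 * norm z" for n
    by (meson order_trans)+
  then show "Bseq (\<lambda>n. (f ^^ n) (fst z))" "Bseq (\<lambda>n. (f ^^ n) (snd z))"
    by (auto intro: BseqI')
qed

lemma uniform_contraction_on_subset:
  "uniform_contraction_on E S \<Longrightarrow> E' \<subseteq> E \<Longrightarrow> uniform_contraction_on E' S"
  unfolding uniform_contraction_on_def by blast

lemma uniform_contraction_on_Bseq: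
  assumes "uniform_contraction_on E S" "x \<in> E"
  shows "Bseq (\<lambda>n. (S ^^ n) x)"
proof -
  obtain C t where "C > 0" "0 < t" "t < 1" "\<And>n. norm ((S ^^ n) x) \<le> C * t ^ n * norm x"
    using assms unfolding uniform_contraction_on_def by blast
  moreover have "C * t ^ n * norm x \<le> C * 1 * norm x" for n
    using \<open>C > 0\<close> \<open>0 < t\<close> \<open>t < 1\<close> by (intro mult_right_mono mult_left_mono power_le_one) auto
  ultimately have "norm ((S ^^ n) x) \<le> C * norm x" for n
    by (metis mult.right_neutral order_trans)
  then show ?thesis
    by (rule BseqI')
qed

lemma contraction_cscale_solve:
  fixes S :: "'a::banach \<Rightarrow> 'a"
  assumes S: "bounded_linear S" and A: "closed A" "subspace A" "S ` A \<subseteq> A"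
    and contraction: "uniform_contraction_on A S" and \<mu>: "cmod \<mu> = 1" and w: "w \<in> A \<times> A"
  shows "\<exists>z\<in>A \<times> A. z - cscale \<mu> (map_prod S S z) = w"
proof -
  define L where "L z = cscale \<mu> (map_prod S S z)" for z
  obtain C t where t: "0 \<le> t" "t < 1"
    and C: "\<And>n x. x \<in> A \<Longrightarrow> norm ((S ^^ n) x) \<le> C * t ^ n * norm x"
    using contraction unfolding uniform_contraction_on_def by (meson less_imp_le)
  have L_pow: "(L ^^ n) z = cscale (\<mu> ^ n) (map_prod (S ^^ n) (S ^^ n) z)" for n z
  proof (induction n)
    case (Suc n)
    have "(L ^^ Suc n) z = cscale \<mu> (map_prod S S (cscale (\<mu> ^ n) (map_prod (S ^^ n) (S ^^ n) z)))"
      by (simp add: L_def Suc.IH)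
    also have "\<dots> = cscale (\<mu> ^ Suc n) (map_prod (S ^^ Suc n) (S ^^ Suc n) z)"
      by (simp add: map_prod_cscale[OF bounded_linear.linear[OF S]] cscale_cscale prod.map_comp)
    finally show ?case .
  qed (simp add: map_prod_def)
  have bound: "norm ((L ^^ n) w) \<le> 4 * C * (norm (fst w) + norm (snd w)) * t ^ n" for n
  proof -
    have "norm ((L ^^ n) w) \<le> 4 * norm (map_prod (S ^^ n) (S ^^ n) w)"
      using norm_cscale_le[of "\<mu> ^ n"] \<mu> by (simp add: L_pow norm_power)
    also have "\<dots> \<le> 4 * (C * t ^ n * norm (fst w) + C * t ^ n * norm (snd w))"
      using w by (intro mult_left_mono order_trans[OF norm_map_prod_le] add_mono C) auto
    finally show ?thesis
      by (simp add: algebra_simps)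
  qed
  have "summable (\<lambda>n. 4 * C * (norm (fst w) + norm (snd w)) * t ^ n)"
    using t by (intro summable_mult summable_geometric) simp
  then have "summable (\<lambda>n. (L ^^ n) w)"
    by (rule summable_comparison_test') (rule bound)
  moreover have "bounded_linear L"
    unfolding L_def
    by (rule bounded_linear_compose[OF bounded_linear_cscale bounded_linear_map_prod[OF S]])
  moreover have "L z \<in> A \<times> A" if "z \<in> A \<times> A" for z
    unfolding L_def using A(3) that by (intro cscale_mem_Times[OF A(2)]) (cases z, auto)
  moreover have "closed (A \<times> A)" "subspace (A \<times> A)"
    using A by (simp_all add: closed_Times subspace_Times)
  ultimately show ?thesis
    using neumann_series_solve[of L "A \<times> A" w] w by (auto simp: L_def)
qed

lemma bounded_linear_cshift: "bounded_linear T \<Longrightarrow> bounded_linear (cshift T \<mu>)"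
  unfolding cshift_def by (intro bounded_linear_sub bounded_linear_map_prod bounded_linear_cscale)

lemma quotient_hyperbolicI:
  assumes inj: "\<And>\<mu> z. cmod \<mu> = 1 \<Longrightarrow> cshift T \<mu> z \<in> F \<times> F \<Longrightarrow> z \<in> F \<times> F"
    and surj: "\<And>\<mu> w. cmod \<mu> = 1 \<Longrightarrow> \<exists>z. cshift T \<mu> z - w \<in> F \<times> F"
  shows "quotient_hyperbolic T F"
  unfolding quotient_hyperbolic_def
proof (intro allI impI)
  fix a b :: real
  assume "a\<^sup>2 + b\<^sup>2 = 1"
  then have \<mu>: "cmod (Complex a b) = 1"
    by (simp add: cmod_def)
  have cshift: "cshift T (Complex a b) (x, y) = (T x - a *\<^sub>R x + b *\<^sub>R y, T y - b *\<^sub>R x - a *\<^sub>R y)" for x y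
    by (simp add: cshift_def cscale_def algebra_simps)
  have "x \<in> F \<and> y \<in> F" if "T x - a *\<^sub>R x + b *\<^sub>R y \<in> F \<and> T y - b *\<^sub>R x - a *\<^sub>R y \<in> F" for x y
    using inj[OF \<mu>, of "(x, y)"] that by (simp add: cshift)
  moreover have "\<exists>x y. T x - a *\<^sub>R x + b *\<^sub>R y - u \<in> F \<and> T y - b *\<^sub>R x - a *\<^sub>R y - v \<in> F" for u v
  proof -
    from surj[OF \<mu>, of "(u, v)"]
    obtain z where "cshift T (Complex a b) z - (u, v) \<in> F \<times> F" ..
    then show ?thesis
      by (intro exI[of _ "fst z"] exI[of _ "snd z"]) (cases z, simp add: cshift)
  qed
  ultimately show "(\<forall>x y. T x - a *\<^sub>R x + b *\<^sub>R y \<in> F \<and> T y - b *\<^sub>R x - a *\<^sub>R y \<in> F \<longrightarrow> x \<in> F \<and> y \<in> F) \<and>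
    (\<forall>u v. \<exists>x y. T x - a *\<^sub>R x + b *\<^sub>R y - u \<in> F \<and> T y - b *\<^sub>R x - a *\<^sub>R y - v \<in> F)"
    by blast
qed

lemma linear_funpow:
  fixes f :: "'a::real_vector \<Rightarrow> 'a"
  assumes "linear f"
  shows "linear (f ^^ n)"
proof (induction n)
  case 0
  show ?case
    by (simp add: linear_iff)
next
  case (Suc n)
  then show ?case
    using linear_compose[OF Suc assms] by (simp add: o_def)
qed

lemma funpow_left_inverse:
  fixes f g :: "'a \<Rightarrow> 'a"
  assumes "\<And>x. g (f x) = x"
  shows "(g ^^ n) ((f ^^ n) x) = x"
proof (induction n)
  case (Suc n)
  have "(g ^^ Suc n) ((f ^^ Suc n) x) = (g ^^ n) (g (f ((f ^^ n) x)))"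
    unfolding funpow_Suc_right[where f = g] by simp
  then show ?case
    using Suc assms by simp
qed simp

lemma Bseq_bounded_linear:
  assumes "bounded_linear f" "Bseq X"
  shows "Bseq (\<lambda>n. f (X n))"
  using bounded_linear_image[of "range X" f] assms by (simp add: Bseq_eq_bounded image_image)

lemma Bseq_diff:
  fixes X Y :: "nat \<Rightarrow> 'a::real_normed_vector"
  shows "Bseq X \<Longrightarrow> Bseq Y \<Longrightarrow> Bseq (\<lambda>n. X n - Y n)"
  using bounded_minus_comp[of X UNIV Y] by (simp add: Bseq_eq_bounded)

definition bounded_orbits :: "('a::real_normed_vector \<Rightarrow> 'a) \<Rightarrow> ('a \<Rightarrow> 'a) \<Rightarrow> 'a set" where
  "bounded_orbits T Ti = {x. Bseq (\<lambda>n. (T ^^ n) x) \<and> Bseq (\<lambda>n. (Ti ^^ n) x)}"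

lemma bounded_orbits_commute: "bounded_orbits T Ti = bounded_orbits Ti T"
  unfolding bounded_orbits_def by blast

lemma subspace_bounded_orbits:
  assumes "linear T" "linear Ti"
  shows "subspace (bounded_orbits T Ti)"
proof -
  have Bseq_subspace: "subspace {x. Bseq (\<lambda>n. (S ^^ n) x)}" if "linear S" for S :: "'a \<Rightarrow> 'a"
    unfolding subspace_def
  proof (intro conjI ballI allI; clarify)
    note lin = linear_funpow[OF that]
    show "Bseq (\<lambda>n. (S ^^ n) 0)"
      by (simp add: linear_0[OF lin])
    show "Bseq (\<lambda>n. (S ^^ n) (x + y))" if "Bseq (\<lambda>n. (S ^^ n) x)" "Bseq (\<lambda>n. (S ^^ n) y)" for x y
      using Bseq_diff[OF that(1) Bseq_diff[OF Bfun_const that(2)], of 0]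
      by (simp add: linear_add[OF lin])
    show "Bseq (\<lambda>n. (S ^^ n) (c *\<^sub>R x))" if "Bseq (\<lambda>n. (S ^^ n) x)" for c x
      using Bseq_bounded_linear[OF bounded_linear_scaleR_right that, of c]
      by (simp add: linear_scale[OF lin])
  qed
  have "bounded_orbits T Ti = {x. Bseq (\<lambda>n. (T ^^ n) x)} \<inter> {x. Bseq (\<lambda>n. (Ti ^^ n) x)}"
    unfolding bounded_orbits_def by blast
  then show ?thesis
    using Bseq_subspace assms by (simp add: subspace_inter)
qed

lemma bounded_orbits_image:
  assumes "\<And>x. Ti (T x) = x" "x \<in> bounded_orbits T Ti"
  shows "T x \<in> bounded_orbits T Ti"
proof -
  have "(T ^^ n) (T x) = (T ^^ Suc n) x" "(Ti ^^ Suc n) (T x) = (Ti ^^ n) x" for n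
    by (simp_all add: funpow_swap1 assms(1))
  moreover have "Bseq (\<lambda>n. (T ^^ Suc n) x)" "Bseq (\<lambda>n. (Ti ^^ n) x)"
    using assms(2) Bseq_Suc_iff[of "\<lambda>n. (T ^^ n) x"] unfolding bounded_orbits_def by auto
  ultimately show ?thesis
    using Bseq_Suc_iff[of "\<lambda>n. (Ti ^^ n) (T x)"] unfolding bounded_orbits_def by simp
qed

lemma bounded_orbits_subset_bounded_set: "bounded_orbits T (inv T) \<subseteq> bounded_set T"
proof
  fix x
  assume "x \<in> bounded_orbits T (inv T)"
  then obtain K1 K2 where K1: "\<And>n. norm ((T ^^ n) x) \<le> K1" and K2: "\<And>n. norm ((inv T ^^ n) x) \<le> K2"
    unfolding bounded_orbits_def Bseq_def by blast
  define K where "K = max K1 K2 + 1"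
  have bound: "norm ((T ^^ n) x) < K" "norm ((inv T ^^ n) x) < K" for n
    using K1[of n] K2[of n] max.cobounded1[of K1 K2] max.cobounded2[of K1 K2]
    unfolding K_def by linarith+
  then have "K > 0"
    using norm_ge_zero le_less_trans by blast
  moreover have "strict_mono Suc"
    by (simp add: strict_mono_Suc_iff)
  moreover have "\<forall>n. norm ((T ^^ Suc n) x) < K \<and> norm ((inv T ^^ Suc n) x) < K"
    using bound by blast
  ultimately show "x \<in> bounded_set T"
    unfolding bounded_set_def by (intro CollectI exI[of _ K] conjI exI[of _ Suc]) auto
qed

locale hyperbolic_splitting =
  fixes T Ti :: "'a::banach \<Rightarrow> 'a" and Em Ep :: "'a set"
  assumes bounded_linear_T: "bounded_linear T" and bounded_linear_Ti: "bounded_linear Ti"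
    and T_Ti [simp]: "\<And>x. T (Ti x) = x" and Ti_T [simp]: "\<And>x. Ti (T x) = x"
    and closed_Em: "closed Em" and closed_Ep: "closed Ep" and complementary: "complementary Em Ep"
    and T_Ep: "T ` Ep \<subseteq> Ep" and Ti_Em: "Ti ` Em \<subseteq> Em"
    and contraction_Ep: "uniform_contraction_on Ep T"
    and contraction_Em: "uniform_contraction_on Em Ti"
begin

lemma inverse_splitting: "hyperbolic_splitting Ti T Ep Em"
  unfolding hyperbolic_splitting_def
  using bounded_linear_T bounded_linear_Ti closed_Em closed_Ep complementary T_Ep Ti_Em
    contraction_Ep contraction_Em
  by (simp add: complementary_commute)

lemma linear_T: "linear T" and linear_Ti: "linear Ti"
  using bounded_linear_T bounded_linear_Ti by (simp_all add: bounded_linear.linear)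

lemma subspace_Em: "subspace Em" and subspace_Ep: "subspace Ep"
  using complementary by (simp_all add: complementary_def)

lemma inv_T: "inv T = Ti"
  by (rule inv_equality) simp_all

abbreviation proj_Ep :: "'a \<Rightarrow> 'a" where
  "proj_Ep \<equiv> proj_along Ep Em"

lemma proj_Ep_mem: "proj_Ep x \<in> Ep" and proj_Ep_complement: "x - proj_Ep x \<in> Em"
  using proj_along[of Ep Em x] complementary by (simp_all add: complementary_commute)

lemma bounded_linear_proj_Ep: "bounded_linear proj_Ep"
  using bounded_linear_proj_along[OF closed_Ep closed_Em] complementary
  by (simp add: complementary_commute)

lemma Bseq_backward_image_Em:
  assumes "a \<in> Em"
  shows "Bseq (\<lambda>n. (Ti ^^ n) ((T ^^ k) a))"
proof (rule Bseq_offset[where k = k])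
  have "(Ti ^^ (n + k)) ((T ^^ k) a) = (Ti ^^ n) a" for n
    by (simp add: funpow_add funpow_left_inverse)
  then show "Bseq (\<lambda>n. (Ti ^^ (n + k)) ((T ^^ k) a))"
    using uniform_contraction_on_Bseq[OF contraction_Em assms] by simp
qed

lemma funpow_T_mem_Ep: "x \<in> Ep \<Longrightarrow> (T ^^ n) x \<in> Ep"
  using T_Ep by (induction n) auto

lemma tendsto_funpow_Ep_zero:
  assumes m: "strict_mono m" and b: "\<And>n. b n \<in> Ep" and "Bseq b"
  shows "(\<lambda>n. (T ^^ m n) (b n)) \<longlonglongrightarrow> 0"
proof -
  obtain K where K: "\<And>n. norm (b n) \<le> K"
    using \<open>Bseq b\<close> unfolding Bseq_def by blast
  obtain C t where "C > 0" "0 < t" "t < 1"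
    and C: "\<And>n x. x \<in> Ep \<Longrightarrow> norm ((T ^^ n) x) \<le> C * t ^ n * norm x"
    using contraction_Ep unfolding uniform_contraction_on_def by blast
  have bound: "norm ((T ^^ m n) (b n)) \<le> C * K * t ^ n" for n
  proof -
    have "norm ((T ^^ m n) (b n)) \<le> C * t ^ m n * norm (b n)"
      by (rule C[OF b])
    also have "\<dots> \<le> C * t ^ n * K"
      using \<open>C > 0\<close> \<open>0 < t\<close> \<open>t < 1\<close> K[of n] seq_suble[OF m, of n]
      by (intro mult_mono mult_left_mono power_decreasing) auto
    finally show ?thesis
      by (simp add: algebra_simps)
  qed
  have "(\<lambda>n. C * K * t ^ n) \<longlonglongrightarrow> 0"
    using \<open>0 < t\<close> \<open>t < 1\<close> by (intro tendsto_mult_right_zero LIMSEQ_power_zero) auto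
  then show ?thesis
    by (rule Lim_null_comparison[OF always_eventually[OF allI[OF bound]]])
qed

text \<open>The approximants are \<open>T\<^sup>m a\<close> with \<open>a\<close> the \<open>Em\<close>-part of \<open>T\<^sup>-\<^sup>m v\<close>: they lie in \<open>Ep\<close>
  and in \<open>T\<^sup>m Em\<close>, so both their orbits are bounded, and they differ from \<open>v\<close> by \<open>T\<^sup>m\<close>
  applied to the bounded \<open>Ep\<close>-part.\<close>
lemma Ep_mem_closure_bounded_orbits:
  assumes v: "v \<in> Ep" and m: "strict_mono m" and bounded: "Bseq (\<lambda>n. (Ti ^^ m n) v)"
  shows "v \<in> closure (bounded_orbits T Ti)"
proof -
  define b where "b n = proj_Ep ((Ti ^^ m n) v)" for n
  define a where "a n = (Ti ^^ m n) v - b n" for n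
  have a: "a n \<in> Em" and b: "b n \<in> Ep" for n
    unfolding a_def b_def by (simp_all add: proj_Ep_mem proj_Ep_complement)
  have split: "(T ^^ m n) (a n) = v - (T ^^ m n) (b n)" for n
  proof -
    have "(T ^^ m n) (a n) + (T ^^ m n) (b n) = (T ^^ m n) ((Ti ^^ m n) v)"
      unfolding a_def by (simp add: linear_add[OF linear_funpow[OF linear_T], symmetric])
    then show ?thesis
      by (simp add: funpow_left_inverse eq_diff_eq)
  qed
  have "(T ^^ m n) (a n) \<in> bounded_orbits T Ti" for n
  proof -
    have "(T ^^ m n) (a n) \<in> Ep"
      using v b funpow_T_mem_Ep subspace_Ep by (simp add: split subspace_diff)
    then show ?thesis
      unfolding bounded_orbits_def
      using uniform_contraction_on_Bseq[OF contraction_Ep] Bseq_backward_image_Em[OF a] by blast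
  qed
  moreover have "Bseq b"
    unfolding b_def by (rule Bseq_bounded_linear[OF bounded_linear_proj_Ep bounded])
  then have "(\<lambda>n. (T ^^ m n) (a n)) \<longlonglongrightarrow> v"
    using tendsto_diff[OF tendsto_const[of v] tendsto_funpow_Ep_zero[OF m b]] by (simp add: split)
  ultimately show ?thesis
    unfolding closure_sequential by (intro exI[of _ "\<lambda>n. (T ^^ m n) (a n)"]) simp
qed

lemma proj_Ep_mem_closure_bounded_orbits:
  assumes m: "strict_mono m" and bounded: "Bseq (\<lambda>n. (Ti ^^ m n) x)"
  shows "proj_Ep x \<in> closure (bounded_orbits T Ti)"
proof (rule Ep_mem_closure_bounded_orbits[OF proj_Ep_mem m])
  have "(Ti ^^ m n) (proj_Ep x) = (Ti ^^ m n) x - (Ti ^^ m n) (x - proj_Ep x)" for n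
    by (simp add: linear_diff[OF linear_funpow[OF linear_Ti]])
  moreover have "Bseq (\<lambda>n. (Ti ^^ m n) (x - proj_Ep x))"
    using Bseq_subseq[OF uniform_contraction_on_Bseq[OF contraction_Em proj_Ep_complement]] .
  ultimately show "Bseq (\<lambda>n. (Ti ^^ m n) (proj_Ep x))"
    using Bseq_diff[OF bounded] by simp
qed

lemma subspace_closure_bounded_orbits: "subspace (closure (bounded_orbits T Ti))"
  by (intro subspace_closure subspace_bounded_orbits linear_T linear_Ti)

lemma closure_bounded_set: "closure (bounded_set T) = closure (bounded_orbits T Ti)"
proof
  show "closure (bounded_orbits T Ti) \<subseteq> closure (bounded_set T)"
    using bounded_orbits_subset_bounded_set[of T] by (simp add: inv_T closure_mono)
  have "x \<in> closure (bounded_orbits T Ti)" if x: "x \<in> bounded_set T" for x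
  proof -
    interpret swapped: hyperbolic_splitting Ti T Ep Em
      by (rule inverse_splitting)
    obtain k m :: "nat \<Rightarrow> nat" and K where "strict_mono k" "strict_mono m"
      "\<And>n. norm ((T ^^ k n) x) < K" "\<And>n. norm ((Ti ^^ m n) x) < K"
      using x unfolding bounded_set_def inv_T by blast
    then have "Bseq (\<lambda>n. (T ^^ k n) x)" "Bseq (\<lambda>n. (Ti ^^ m n) x)"
      by (meson BseqI' less_imp_le)+
    then have "proj_Ep x \<in> closure (bounded_orbits T Ti)"
      "proj_along Em Ep x \<in> closure (bounded_orbits T Ti)"
      using proj_Ep_mem_closure_bounded_orbits[OF \<open>strict_mono m\<close>]
        swapped.proj_Ep_mem_closure_bounded_orbits[OF \<open>strict_mono k\<close>]
      by (simp_all add: bounded_orbits_commute[of Ti])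
    then have "proj_along Em Ep x + proj_Ep x \<in> closure (bounded_orbits T Ti)"
      using subspace_closure_bounded_orbits by (simp add: subspace_add)
    then show ?thesis
      using proj_along_commute[OF complementary] by simp
  qed
  then show "closure (bounded_set T) \<subseteq> closure (bounded_orbits T Ti)"
    by (simp add: closure_minimal subsetI)
qed

lemma T_image_closure_bounded_orbits: "T ` closure (bounded_orbits T Ti) \<subseteq> closure (bounded_orbits T Ti)"
  by (rule image_closure_subset[OF linear_continuous_on[OF bounded_linear_T] closed_closure])
    (use bounded_orbits_image[of Ti T] closure_subset in auto)

lemma T_closure_bounded_orbits: "T ` closure (bounded_orbits T Ti) = closure (bounded_orbits T Ti)"
proof -
  interpret swapped: hyperbolic_splitting Ti T Ep Em
    by (rule inverse_splitting)
  have "Ti ` closure (bounded_orbits T Ti) \<subseteq> closure (bounded_orbits T Ti)"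
    using swapped.T_image_closure_bounded_orbits by (simp add: bounded_orbits_commute[of Ti])
  then have "x \<in> T ` closure (bounded_orbits T Ti)" if "x \<in> closure (bounded_orbits T Ti)" for x
    using that by (metis T_Ti image_eqI image_subset_iff)
  then show ?thesis
    using T_image_closure_bounded_orbits by blast
qed

lemma proj_Ep_closure_bounded_orbits: "proj_Ep ` closure (bounded_orbits T Ti) \<subseteq> closure (bounded_orbits T Ti)"
proof (rule image_closure_subset[OF linear_continuous_on[OF bounded_linear_proj_Ep] closed_closure])
  have "strict_mono (id :: nat \<Rightarrow> nat)"
    by (simp add: strict_mono_def)
  then show "proj_Ep ` bounded_orbits T Ti \<subseteq> closure (bounded_orbits T Ti)"
    using proj_Ep_mem_closure_bounded_orbits[of id] by (auto simp: bounded_orbits_def)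
qed

lemma cshift_solvable_Ep:
  assumes A: "closed A" "subspace A" "A \<subseteq> Ep" "T ` A \<subseteq> A" and \<mu>: "cmod \<mu> = 1" and w: "w \<in> A \<times> A"
  shows "\<exists>z\<in>A \<times> A. cshift T \<mu> z = w"
proof -
  have "\<mu> \<noteq> 0"
    using \<mu> by auto
  then have inverse: "cmod (inverse \<mu>) = 1" "\<mu> * inverse \<mu> = 1"
    using \<mu> by (simp_all add: norm_inverse)
  have "- cscale (inverse \<mu>) w \<in> A \<times> A"
    using subspace_neg[OF subspace_Times[OF A(2) A(2)] cscale_mem_Times[OF A(2) w]] .
  from contraction_cscale_solve[OF bounded_linear_T A(1,2,4)
      uniform_contraction_on_subset[OF contraction_Ep A(3)] inverse(1) this]
  obtain z where z: "z \<in> A \<times> A"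
    "z - cscale (inverse \<mu>) (map_prod T T z) = - cscale (inverse \<mu>) w" ..
  note cscale_linear = bounded_linear.linear[OF bounded_linear_cscale[of \<mu>]]
  have "cshift T \<mu> z = - cscale \<mu> (z - cscale (inverse \<mu>) (map_prod T T z))"
    by (simp add: cshift_def linear_diff[OF cscale_linear] cscale_cscale inverse(2))
  also have "\<dots> = w"
    by (simp add: z(2) linear_neg[OF cscale_linear] cscale_cscale inverse(2))
  finally show ?thesis
    using z(1) by blast
qed

lemma cshift_solvable_Em:
  assumes A: "closed A" "subspace A" "A \<subseteq> Em" "Ti ` A \<subseteq> A" and \<mu>: "cmod \<mu> = 1" and w: "w \<in> A \<times> A"
  shows "\<exists>z\<in>A \<times> A. cshift T \<mu> z = w"
proof -
  have "map_prod Ti Ti w \<in> A \<times> A"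
    using A(4) w by (cases w) auto
  from contraction_cscale_solve[OF bounded_linear_Ti A(1,2,4)
      uniform_contraction_on_subset[OF contraction_Em A(3)] \<mu> this]
  obtain z where z: "z \<in> A \<times> A" "z - cscale \<mu> (map_prod Ti Ti z) = map_prod Ti Ti w" ..
  have T_Ti_prod: "map_prod T T (map_prod Ti Ti y) = y" for y
    by (cases y) simp
  have "cshift T \<mu> z = map_prod T T (z - cscale \<mu> (map_prod Ti Ti z))"
    using bounded_linear.linear[OF bounded_linear_map_prod[OF bounded_linear_T]]
    by (simp add: cshift_def linear_diff map_prod_cscale[OF linear_T] T_Ti_prod)
  also have "\<dots> = w"
    by (simp add: z(2) T_Ti_prod)
  finally show ?thesis
    using z(1) by blast
qed

lemma cshift_solvable:
  assumes A: "closed A" "subspace A" "T ` A \<subseteq> A" "Ti ` A \<subseteq> A" "proj_Ep ` A \<subseteq> A"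
    and \<mu>: "cmod \<mu> = 1" and w: "w \<in> A \<times> A"
  shows "\<exists>z\<in>A \<times> A. cshift T \<mu> z = w"
proof -
  define wp where "wp = map_prod proj_Ep proj_Ep w"
  have "proj_Ep x \<in> A \<inter> Ep" "x - proj_Ep x \<in> A \<inter> Em" if "x \<in> A" for x
    using that A(2,5) by (auto simp: proj_Ep_mem proj_Ep_complement subspace_diff)
  then have wp: "wp \<in> (A \<inter> Ep) \<times> (A \<inter> Ep)" and wm: "w - wp \<in> (A \<inter> Em) \<times> (A \<inter> Em)"
    using w by (auto simp: wp_def mem_Times_iff)
  have "closed (A \<inter> Ep)" "subspace (A \<inter> Ep)" "A \<inter> Ep \<subseteq> Ep" "T ` (A \<inter> Ep) \<subseteq> A \<inter> Ep"
    using A closed_Ep subspace_Ep T_Ep by (auto simp: closed_Int subspace_inter)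
  from cshift_solvable_Ep[OF this \<mu> wp]
  obtain zp where zp: "zp \<in> (A \<inter> Ep) \<times> (A \<inter> Ep)" "cshift T \<mu> zp = wp" ..
  have "closed (A \<inter> Em)" "subspace (A \<inter> Em)" "A \<inter> Em \<subseteq> Em" "Ti ` (A \<inter> Em) \<subseteq> A \<inter> Em"
    using A closed_Em subspace_Em Ti_Em by (auto simp: closed_Int subspace_inter)
  from cshift_solvable_Em[OF this \<mu> wm]
  obtain zm where zm: "zm \<in> (A \<inter> Em) \<times> (A \<inter> Em)" "cshift T \<mu> zm = w - wp" ..
  have "cshift T \<mu> (zm + zp) = w"
    using linear_add[OF bounded_linear.linear[OF bounded_linear_cshift[OF bounded_linear_T]]]
    by (simp add: zm zp)
  moreover have "zm + zp \<in> A \<times> A"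
    using zm(1) zp(1) A(2) by (auto simp: mem_Times_iff subspace_add)
  ultimately show ?thesis
    by (intro bexI[of _ "zm + zp"])
qed

lemma cshift_kernel:
  assumes \<mu>: "cmod \<mu> = 1" and kernel: "cshift T \<mu> z = 0"
  shows "z \<in> bounded_orbits T Ti \<times> bounded_orbits T Ti"
proof -
  have eigen: "map_prod T T z = cscale \<mu> z"
    using kernel by (simp add: cshift_def)
  have "\<mu> \<noteq> 0"
    using \<mu> by auto
  have "cscale (inverse \<mu>) z = cscale (inverse \<mu>) (map_prod Ti Ti (map_prod T T z))"
    by (cases z) simp
  also have "\<dots> = map_prod Ti Ti (cscale (inverse \<mu>) (cscale \<mu> z))"
    by (simp add: eigen map_prod_cscale[OF linear_Ti])
  also have "\<dots> = map_prod Ti Ti z"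
    using \<open>\<mu> \<noteq> 0\<close> by (simp add: cscale_cscale)
  finally have "map_prod Ti Ti z = cscale (inverse \<mu>) z"
    by simp
  from Bseq_funpow_eigenvector[OF linear_Ti this] Bseq_funpow_eigenvector[OF linear_T eigen \<mu>]
  show ?thesis
    using \<mu> by (simp add: bounded_orbits_def mem_Times_iff norm_inverse)
qed

lemma quotient_hyperbolic_closure_bounded_orbits:
  "quotient_hyperbolic T (closure (bounded_orbits T Ti))"
proof (rule quotient_hyperbolicI)
  let ?F = "closure (bounded_orbits T Ti)"
  interpret swapped: hyperbolic_splitting Ti T Ep Em
    by (rule inverse_splitting)
  have Ti_F: "Ti ` ?F \<subseteq> ?F"
    using swapped.T_image_closure_bounded_orbits unfolding bounded_orbits_commute[of Ti] .
  have F: "closed ?F" "subspace ?F" "T ` ?F \<subseteq> ?F" "Ti ` ?F \<subseteq> ?F" "proj_Ep ` ?F \<subseteq> ?F"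
    using subspace_closure_bounded_orbits T_image_closure_bounded_orbits Ti_F
      proj_Ep_closure_bounded_orbits
    by simp_all
  fix \<mu> :: complex
  assume \<mu>: "cmod \<mu> = 1"
  show "z \<in> ?F \<times> ?F" if image: "cshift T \<mu> z \<in> ?F \<times> ?F" for z
  proof -
    from cshift_solvable[OF F \<mu> image]
    obtain z' where z': "z' \<in> ?F \<times> ?F" "cshift T \<mu> z' = cshift T \<mu> z" ..
    have "cshift T \<mu> (z - z') = 0"
      using linear_diff[OF bounded_linear.linear[OF bounded_linear_cshift[OF bounded_linear_T]]]
      by (simp add: z')
    then have "z - z' \<in> bounded_orbits T Ti \<times> bounded_orbits T Ti"
      by (rule cshift_kernel[OF \<mu>])
    then have "z - z' \<in> ?F \<times> ?F"
      using closure_subset[of "bounded_orbits T Ti"] by (auto simp: mem_Times_iff)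
    then show ?thesis
      using z'(1) F(2) subspace_add[of "?F \<times> ?F" "z - z'" z'] by (simp add: subspace_Times)
  qed
  show "\<exists>z. cshift T \<mu> z - w \<in> ?F \<times> ?F" for w
  proof -
    have "w \<in> UNIV \<times> UNIV"
      by simp
    from cshift_solvable[OF closed_UNIV subspace_UNIV subset_UNIV subset_UNIV subset_UNIV \<mu> this]
    obtain z where "z \<in> UNIV \<times> UNIV" "cshift T \<mu> z = w" ..
    then show ?thesis
      using subspace_0[OF F(2)] by (intro exI[of _ z]) (simp add: mem_Times_iff)
  qed
qed

end

theorem theorem4:
  fixes T :: "'a::banach \<Rightarrow> 'a"
  assumes "laut T" and "generalized_hyperbolic T"
  shows "(closure (bounded_set T) = UNIV \<or> has_hyperbolic_component T) \<and>
         (closure (bounded_set T) \<noteq> UNIV \<longrightarrow> quotient_hyperbolic T (closure (bounded_set T)))"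
proof -
  obtain Em Ep where splitting: "closed Em" "closed Ep" "subspace Em" "subspace Ep" "Em \<inter> Ep = {0}"
    "\<forall>z. \<exists>u\<in>Em. \<exists>v\<in>Ep. z = u + v" "T ` Ep \<subseteq> Ep" "inv T ` Em \<subseteq> Em"
    "uniform_contraction_on Ep T" "uniform_contraction_on Em (inv T)"
    using assms(2) unfolding generalized_hyperbolic_def by blast
  have "bounded_linear T" "bounded_linear (inv T)" "bij T"
    using assms(1) unfolding laut_def by auto
  then interpret hyperbolic_splitting T "inv T" Em Ep
    using splitting
    by (auto simp: hyperbolic_splitting_def complementary_def bij_is_inj bij_is_surj surj_f_inv_f)
  define F where "F = closure (bounded_set T)"
  have F: "F = closure (bounded_orbits T (inv T))"
    unfolding F_def by (rule closure_bounded_set)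
  have "quotient_hyperbolic T F"
    unfolding F by (rule quotient_hyperbolic_closure_bounded_orbits)
  moreover have "closed F" "subspace F" "T ` F = F"
    unfolding F by (simp_all add: subspace_closure_bounded_orbits T_closure_bounded_orbits)
  ultimately show ?thesis
    unfolding F_def[symmetric] has_hyperbolic_component_def by blast
qed

end
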